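(* Let $T$ be Takagi's function on $[0,1]$, $T(x)=\sum_{n=1}^\infty 2^{-n}\phi^{(n)}(x)$, with $\phi(x)=2x$ on $[0,1/2]$, $\phi(x)=2-2x$ on $[1/2,1]$. Let $x\in(0,1)$ be non-dyadic, with binary expansion $x=\sum_{k\ge1}2^{-k}\varepsilon_k$, and write $x=\sum_{n\ge1}2^{-a_n}$, $1-x=\sum_{n\ge1}2^{-b_n}$ with $\{a_n\},\{b_n\}$ strictly increasing sequences of positive integers. Then the limit $$\lim_{h\to0}\frac{T(x+h)-T(x)}{h\log_2(1/|h|)}$$ exists if and only if $x$ is density-regular, in which case the limit equals $d_0(x)-d_1(x)$.
   Context: $d_1(x):=\lim_{n\to\infty}\frac1n\sum_{k=1}^n\varepsilon_k$ (when it exists) and $d_0(x):=1-d_1(x)$. The point $x$ is density-regular if $d_1(x)$ exists and one of the following holds: (a) $0<d_1(x)<1$; (b) $d_1(x)=0$ and $a_{n+1}/a_n\to1$; (c) $d_1(x)=1$ and $b_{n+1}/b_n\to1$. A dyadic point is one of the form $k/2^m$. *)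

theory Defs
  imports Complex_Main "HOL-Library.Infinite_Set"
begin

definition phi :: "real \<Rightarrow> real" where
  "phi x = (if x \<le> 1/2 then 2 * x else 2 - 2 * x)"

definition takagi :: "real \<Rightarrow> real" where
  "takagi x = (\<Sum>n. (1/2) ^ Suc n * (phi ^^ Suc n) x)"

definition bdigit :: "real \<Rightarrow> nat \<Rightarrow> nat" where
  "bdigit x k = nat (\<lfloor>2 ^ k * x\<rfloor> mod 2)"

text \<open>a x n for n \<ge> 1: the n-th position (in increasing order) of a digit 1, i.e. x = sum 2^(-a_n).\<close>
definition apos :: "real \<Rightarrow> nat \<Rightarrow> nat" where
  "apos x n = enumerate {k. 1 \<le> k \<and> bdigit x k = 1} (n - 1)"

definition bpos :: "real \<Rightarrow> nat \<Rightarrow> nat" where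
  "bpos x n = apos (1 - x) n"

definition digit_avg :: "real \<Rightarrow> nat \<Rightarrow> real" where
  "digit_avg x n = (1 / real n) * (\<Sum>k=1..n. real (bdigit x k))"

definition d1 :: "real \<Rightarrow> real" where
  "d1 x = lim (digit_avg x)"

definition d0 :: "real \<Rightarrow> real" where
  "d0 x = 1 - d1 x"

definition density_regular :: "real \<Rightarrow> bool" where
  "density_regular x \<longleftrightarrow> convergent (digit_avg x) \<and>
     ((0 < d1 x \<and> d1 x < 1) \<or>
      (d1 x = 0 \<and> (\<lambda>n. real (apos x (Suc n)) / real (apos x n)) \<longlonglongrightarrow> 1) \<or>
      (d1 x = 1 \<and> (\<lambda>n. real (bpos x (Suc n)) / real (bpos x n)) \<longlonglongrightarrow> 1))"

definition dyadic :: "real \<Rightarrow> bool" where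
  "dyadic x \<longleftrightarrow> (\<exists>(k::int) (m::nat). x = real_of_int k / 2 ^ m)"

end

theory Submission
  imports Defs
begin

text \<open>Write \<open>T(x) = \<Sum>\<^sub>n dist(2\<^sup>n x, \<int>) / 2\<^sup>n\<close>. On the dyadic cell of level \<open>N\<close> containing \<open>x\<close> the
  first \<open>N\<close> terms are affine, with total slope the digit discrepancy \<open>D\<^sub>N\<close> (number of zeros
  minus number of ones among the first \<open>N\<close> digits), while the remaining terms change by at most
  about \<open>(log\<^sub>2(1/|h|) - N) |h|\<close>. Hence the quotient behaves like \<open>D\<^sub>N / N\<close> for
  \<open>N \<approx> log\<^sub>2(1/|h|)\<close>. Evaluating at the two endpoints of the cells shows that a limit \<open>L\<close>
  forces \<open>D\<^sub>N / N \<rightarrow> L\<close>, i.e. the digit density exists and \<open>L = d\<^sub>0 - d\<^sub>1\<close>.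
  Conversely, if the density exists, the expansion is valid as long as \<open>x\<close> stays
  \<open>2^(-N - o(N))\<close>-far from the endpoints of its cells, i.e. runs of equal digits after position
  \<open>N\<close> have length \<open>o(N)\<close>. This is automatic when \<open>0 < d\<^sub>1 < 1\<close>, and amounts to
  \<open>a\<^sub>n\<^sub>+\<^sub>1 / a\<^sub>n \<rightarrow> 1\<close> when \<open>d\<^sub>1 = 0\<close> (symmetrically for \<open>b\<^sub>n\<close> when \<open>d\<^sub>1 = 1\<close>).
  That this ratio condition is also necessary is seen by evaluating \<open>T\<close> just below the truncation
  of \<open>x\<close> after a digit 1 that precedes a long run of zeros.\<close>

section \<open>Distance to the nearest integer\<close>

definition dist_int :: "real \<Rightarrow> real" where
  "dist_int y = \<bar>y - of_int (round y)\<bar>"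

lemma dist_int_le: "dist_int y \<le> \<bar>y - of_int m\<bar>"
proof (cases "m = round y")
  case False
  then have "\<bar>m - round y\<bar> \<ge> 1" by linarith
  then have "\<bar>of_int m - of_int (round y)\<bar> \<ge> (1::real)"
    by (metis of_int_1_le_iff of_int_abs of_int_diff)
  then show ?thesis
    using of_int_round_ge[of y] of_int_round_le[of y] unfolding dist_int_def by linarith
qed (simp add: dist_int_def)

lemma dist_int_greatest: "(\<And>m::int. a \<le> \<bar>y - of_int m\<bar>) \<Longrightarrow> a \<le> dist_int y"
  by (simp add: dist_int_def)

lemma dist_int_nonneg: "0 \<le> dist_int y"
  by (simp add: dist_int_def)

lemma dist_int_le_half: "dist_int y \<le> 1/2"
  using of_int_round_ge[of y] of_int_round_le[of y] unfolding dist_int_def by linarith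

lemma dist_int_of_int [simp]: "dist_int (of_int m) = 0"
  using dist_int_le[of "of_int m" m] dist_int_nonneg[of "of_int m"] by simp

lemma dist_int_add_of_int: "dist_int (y + of_int m) = dist_int y"
  using dist_int_le[of "y + of_int m" "round y + m"] dist_int_le[of y "round (y + of_int m) - m"]
  by (simp add: dist_int_def algebra_simps)

lemma dist_int_minus: "dist_int (- y) = dist_int y"
  using dist_int_le[of "-y" "- round y"] dist_int_le[of y "- round (-y)"]
  by (simp add: dist_int_def abs_minus_commute)

lemma dist_int_of_int_diff: "dist_int (of_int m - y) = dist_int y"
  using dist_int_add_of_int[of "-y" m] dist_int_minus[of y] by simp

lemma dist_int_lipschitz: "\<bar>dist_int u - dist_int v\<bar> \<le> \<bar>u - v\<bar>"
  using dist_int_le[of u "round v"] dist_int_le[of v "round u"] unfolding dist_int_def by linarith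

lemma dist_int_half_interval:
  assumes "of_int j / 2 \<le> y" "y \<le> (of_int j + 1) / 2"
  shows "dist_int y = (if even j then y - of_int j / 2 else (of_int j + 1) / 2 - y)"
proof (cases "even j")
  case True
  then obtain i where j: "j = 2 * i" by blast
  have "y - of_int i \<le> dist_int y"
  proof (rule dist_int_greatest)
    fix m :: int
    show "y - of_int i \<le> \<bar>y - of_int m\<bar>"
    proof (cases "m \<le> i")
      case False then have "of_int m \<ge> (of_int i + 1 :: real)" by simp
      then show ?thesis using assms j by simp
    qed (smt (verit) of_int_le_iff)
  qed
  then show ?thesis using dist_int_le[of y i] assms j True by simp
next
  case False
  then obtain i where j: "j = 2 * i + 1" by (metis oddE)
  have "of_int i + 1 - y \<le> dist_int y"
  proof (rule dist_int_greatest)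
    fix m :: int
    show "of_int i + 1 - y \<le> \<bar>y - of_int m\<bar>"
    proof (cases "m \<ge> i + 1")
      case False then have "of_int m \<le> (of_int i :: real)" by simp
      then show ?thesis using assms j by simp
    qed (smt (verit) of_int_le_iff of_int_add of_int_1)
  qed
  then show ?thesis using dist_int_le[of y "i + 1"] assms j False by simp
qed

lemma dist_int_eq_self: "0 \<le> y \<Longrightarrow> y \<le> 1/2 \<Longrightarrow> dist_int y = y"
  using dist_int_half_interval[of 0 y] by simp

lemma dist_int_double_dist_int: "dist_int (2 * dist_int y) = dist_int (2 * y)"
proof -
  have "2 * dist_int y = \<bar>2 * (y - of_int (round y))\<bar>" unfolding dist_int_def by (subst abs_mult) simp
  also have "\<dots> = \<bar>2 * y + of_int (- 2 * round y)\<bar>" by (simp add: algebra_simps)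
  finally have "2 * dist_int y = \<bar>2 * y + of_int (- 2 * round y)\<bar>" .
  then show ?thesis by (metis abs_if dist_int_minus dist_int_add_of_int)
qed

section \<open>Binary digits\<close>

lemma bdigit_le_1: "bdigit y k \<le> 1"
  unfolding bdigit_def by (simp add: nat_le_iff)

lemma bdigit_0_or_1: "bdigit y k = 0 \<or> bdigit y k = 1"
  using bdigit_le_1[of y k] by linarith

lemma floor_pow2_add_ge: "2^d * \<lfloor>2^a * y\<rfloor> \<le> \<lfloor>(2::real)^(a+d) * y\<rfloor>"
proof -
  have "real_of_int (2^d * \<lfloor>2^a * y\<rfloor>) \<le> 2^d * (2^a * y)"
    using of_int_floor_le[of "2^a*y"] by simp
  then show ?thesis by (simp add: le_floor_iff power_add mult_ac)
qed

lemma floor_pow2_add_less: "\<lfloor>(2::real)^(a+d) * y\<rfloor> < 2^d * (\<lfloor>2^a * y\<rfloor> + 1)"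
proof -
  have "real_of_int \<lfloor>(2::real)^(a+d) * y\<rfloor> \<le> 2^d * (2^a * y)"
    using of_int_floor_le[of "2^(a+d) * y"] by (simp add: power_add mult_ac)
  also have "\<dots> < 2^d * (of_int \<lfloor>2^a * y\<rfloor> + 1)"
    using real_of_int_floor_add_one_gt[of "2^a*y"] by simp
  finally have "real_of_int \<lfloor>(2::real)^(a+d) * y\<rfloor> < real_of_int (2^d * (\<lfloor>2^a * y\<rfloor> + 1))"
    by simp
  then show ?thesis by (simp only: of_int_less_iff)
qed

lemma floor_pow2_Suc:
  "\<lfloor>(2::real)^(Suc k) * y\<rfloor> = 2 * \<lfloor>2^k * y\<rfloor> + int (bdigit y (Suc k))"
proof -
  define F where "F = \<lfloor>(2::real)^k * y\<rfloor>"
  define F' where "F' = \<lfloor>(2::real)^(Suc k) * y\<rfloor>"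
  have "2 * F \<le> F'" "F' < 2 * (F + 1)"
    using floor_pow2_add_ge[of 1 k y] floor_pow2_add_less[of k 1 y] unfolding F_def F'_def by simp_all
  then have "F' mod 2 = F' - 2 * F"
    using mod_pos_pos_trivial[of "F' - 2 * F" 2] by (simp add: mod_diff_eq[symmetric])
  moreover have "int (bdigit y (Suc k)) = F' mod 2" unfolding bdigit_def F'_def by simp
  ultimately show ?thesis unfolding F_def F'_def by simp
qed

lemma floor_pow2_zero_digits:
  assumes "\<And>i. 1 \<le> i \<Longrightarrow> i \<le> j \<Longrightarrow> bdigit y (N+i) = 0"
  shows "\<lfloor>(2::real)^(N+j) * y\<rfloor> = 2^j * \<lfloor>2^N * y\<rfloor>"
  using assms
proof (induction j)
  case (Suc j)
  then show ?case using floor_pow2_Suc[of "N+j" y] Suc.prems[of "Suc j"] by simp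
qed simp

lemma frac_pow2_less_zero_digits:
  assumes "\<And>i. 1 \<le> i \<Longrightarrow> i \<le> j \<Longrightarrow> bdigit y (N+i) = 0"
  shows "frac (2^N * y) < (1/2::real)^j"
proof -
  have e: "\<lfloor>(2::real)^(N+j) * y\<rfloor> = 2^j * \<lfloor>2^N * y\<rfloor>" by (rule floor_pow2_zero_digits[OF assms])
  have "(2::real)^(N+j) * y < of_int \<lfloor>(2::real)^(N+j) * y\<rfloor> + 1" by linarith
  then have "2^j * (2^N * y) < 2^j * of_int \<lfloor>2^N * y\<rfloor> + 1"
    using e by (simp add: power_add algebra_simps)
  then have "2^j * (2^N * y - of_int \<lfloor>2^N * y\<rfloor>) < 1" by (simp add: algebra_simps)
  then show ?thesis by (simp add: frac_def power_one_over field_simps)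
qed

lemma frac_pow2_ge_digit:
  assumes "1 \<le> j" "bdigit y (N+j) = 1"
  shows "(1/2::real)^j \<le> frac (2^N * y)"
proof -
  obtain i where j: "j = Suc i" using assms by (cases j) auto
  have "2^j * \<lfloor>2^N * y\<rfloor> + 1 \<le> \<lfloor>(2::real)^(N+j) * y\<rfloor>"
    using floor_pow2_Suc[of "N+i" y] floor_pow2_add_ge[of i N y] assms j by simp
  then have "real_of_int (2^j * \<lfloor>2^N * y\<rfloor> + 1) \<le> 2^(N+j) * y"
    by (meson le_floor_iff)
  then have "1 \<le> 2^j * (2^N * y - of_int \<lfloor>2^N * y\<rfloor>)" by (simp add: power_add algebra_simps)
  then show ?thesis by (simp add: frac_def power_one_over field_simps)
qed

lemma frac_pow2_pos:
  assumes "\<not> dyadic y" shows "0 < frac ((2::real)^N * y)"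
proof -
  have "2^N * y \<notin> \<int>"
  proof
    assume "2^N * y \<in> \<int>"
    then obtain k where "2^N * y = of_int k" by (auto elim: Ints_cases)
    then have "y = of_int k / 2^N" by (simp add: field_simps)
    then show False using assms unfolding dyadic_def by blast
  qed
  then show ?thesis by simp
qed

lemma not_dyadic_one_minus: "\<not> dyadic y \<Longrightarrow> \<not> dyadic (1 - y)"
proof
  assume a: "\<not> dyadic y" and "dyadic (1 - y)"
  then obtain k m where "1 - y = real_of_int k / 2^m" unfolding dyadic_def by blast
  then have "y = real_of_int (2^m - k) / 2^m" by (simp add: field_simps)
  then show False using a unfolding dyadic_def by blast
qed

lemma floor_pow2_one_minus:
  assumes "\<not> dyadic y"
  shows "\<lfloor>(2::real)^N * (1 - y)\<rfloor> = 2^N - 1 - \<lfloor>2^N * y\<rfloor>"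
  using frac_pow2_pos[OF assms, of N] frac_lt_1[of "2^N * y"]
  by (intro floor_unique) (simp_all add: frac_def algebra_simps)

lemma frac_pow2_one_minus:
  assumes "\<not> dyadic y"
  shows "frac ((2::real)^N * (1 - y)) = 1 - frac (2^N * y)"
proof -
  have "real_of_int \<lfloor>(2::real)^N * (1 - y)\<rfloor> = 2^N - 1 - real_of_int \<lfloor>2^N * y\<rfloor>"
    using floor_pow2_one_minus[OF assms, of N] by simp
  then show ?thesis unfolding frac_def by (simp add: algebra_simps)
qed

lemma bdigit_one_minus:
  assumes "\<not> dyadic y" "1 \<le> k"
  shows "bdigit (1 - y) k = 1 - bdigit y k"
proof -
  have "even ((2::int)^k)" using assms(2) by simp
  then obtain c where c: "(2::int)^k = 2 * c" by blast
  define F where "F = \<lfloor>(2::real)^k * y\<rfloor>"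
  have "(2^k - 1 - F) mod 2 = 1 - F mod 2" using c by presburger
  moreover have "F mod 2 = 0 \<or> F mod 2 = 1" by presburger
  ultimately show ?thesis unfolding bdigit_def floor_pow2_one_minus[OF assms(1)] F_def[symmetric]
    by auto
qed

section \<open>The Takagi series on dyadic cells\<close>

text \<open>The series is defined on all of \<open>\<real>\<close> (it agrees with \<open>takagi\<close> on \<open>[0, 1]\<close>), so that
  no side condition on \<open>x + h\<close> is needed below.\<close>
definition takagi_series :: "real \<Rightarrow> real" where
  "takagi_series u = (\<Sum>n. dist_int (2^n * u) / 2^n)"

definition takagi_tail :: "nat \<Rightarrow> real \<Rightarrow> real" where
  "takagi_tail N u = (\<Sum>n. dist_int (2^(n+N) * u) / 2^(n+N))"

definition digit_discrepancy :: "nat \<Rightarrow> real \<Rightarrow> real" where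
  "digit_discrepancy N x = (\<Sum>m<N. 1 - 2 * real (bdigit x (Suc m)))"

definition dyadic_cell :: "nat \<Rightarrow> real \<Rightarrow> real set" where
  "dyadic_cell N x = {of_int \<lfloor>2^N * x\<rfloor> / 2^N .. (of_int \<lfloor>2^N * x\<rfloor> + 1) / 2^N}"

lemma takagi_term_le: "dist_int (2^(n+N) * u) / 2^(n+N) \<le> (1/2) * (1/2)^N * (1/2)^n"
proof -
  have "dist_int (2^(n+N) * u) / 2^(n+N) \<le> (1/2) / 2^(n+N)"
    using dist_int_le_half by (intro divide_right_mono) auto
  also have "\<dots> = (1/2) * (1/2)^N * (1/2)^n" by (simp add: power_add power_one_over)
  finally show ?thesis .
qed

lemma summable_takagi_tail: "summable (\<lambda>n. dist_int (2^(n+N) * u) / 2^(n+N))"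
  by (rule summable_comparison_test'[where g = "\<lambda>n. (1/2) * (1/2)^N * (1/2)^n"])
    (use takagi_term_le dist_int_nonneg in \<open>auto intro!: summable_mult summable_geometric\<close>)

lemma takagi_tail_nonneg: "0 \<le> takagi_tail N u"
  unfolding takagi_tail_def by (intro suminf_nonneg summable_takagi_tail) (simp add: dist_int_nonneg)

lemma takagi_tail_le: "takagi_tail N u \<le> (1/2)^N"
proof -
  have "takagi_tail N u \<le> (\<Sum>n. (1/2::real) * (1/2)^N * (1/2)^n)"
    unfolding takagi_tail_def
    by (intro suminf_le summable_takagi_tail summable_mult summable_geometric takagi_term_le) auto
  also have "\<dots> = (1/2)^N"
    by (subst suminf_mult) (auto simp: suminf_geometric)
  finally show ?thesis .
qed

lemma takagi_series_split:
  "takagi_series u = (\<Sum>m<N. dist_int (2^m * u) / 2^m) + takagi_tail N u"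
  using suminf_split_initial_segment[OF summable_takagi_tail[of 0 u], of N]
  unfolding takagi_series_def takagi_tail_def by simp

lemma takagi_tail_Suc: "takagi_tail N u = dist_int (2^N * u) / 2^N + takagi_tail (Suc N) u"
  unfolding takagi_tail_def using suminf_split_head[OF summable_takagi_tail[of N u]] by simp

lemma takagi_tail_ge_partial: "(\<Sum>i<d. dist_int (2^(N+i) * u) / 2^(N+i)) \<le> takagi_tail N u"
proof (induction d arbitrary: N)
  case 0 then show ?case by (simp add: takagi_tail_nonneg)
next
  case (Suc d)
  have "(\<Sum>i<Suc d. dist_int (2^(N+i) * u) / 2^(N+i))
      = dist_int (2^N * u) / 2^N + (\<Sum>i<d. dist_int (2^(Suc N+i) * u) / 2^(Suc N+i))"
    by (subst sum.lessThan_Suc_shift) simp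
  also have "\<dots> \<le> takagi_tail N u" using Suc.IH[of "Suc N"] takagi_tail_Suc[of N u] by simp
  finally show ?case .
qed

text \<open>The first \<open>d\<close> terms are \<open>1\<close>-Lipschitz each; the rest is at most \<open>2^-(N+d)\<close>.\<close>
lemma takagi_tail_diff: "\<bar>takagi_tail N u - takagi_tail N v\<bar> \<le> real d * \<bar>u - v\<bar> + (1/2)^(N+d)"
proof (induction d arbitrary: N)
  case 0
  then show ?case
    using takagi_tail_nonneg[of N u] takagi_tail_nonneg[of N v] takagi_tail_le[of N u] takagi_tail_le[of N v]
    by simp
next
  case (Suc d)
  have "\<bar>dist_int (2^N * u) / 2^N - dist_int (2^N * v) / 2^N\<bar> = \<bar>dist_int (2^N * u) - dist_int (2^N * v)\<bar> / 2^N"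
    by (simp add: diff_divide_distrib[symmetric])
  also have "\<dots> \<le> \<bar>2^N * u - 2^N * v\<bar> / 2^N" by (intro divide_right_mono dist_int_lipschitz) auto
  also have "\<dots> = \<bar>u - v\<bar>" by (simp add: right_diff_distrib[symmetric] abs_mult)
  finally have "\<bar>dist_int (2^N * u) / 2^N - dist_int (2^N * v) / 2^N\<bar> \<le> \<bar>u - v\<bar>" .
  then show ?case
    using Suc.IH[of "Suc N"] takagi_tail_Suc[of N u] takagi_tail_Suc[of N v] by (simp add: algebra_simps)
qed

lemma takagi_tail_dyadic: "takagi_tail N (of_int J / 2^N) = 0"
proof -
  have "dist_int (2^(n+N) * (of_int J / 2^N)) = 0" for n
    using dist_int_of_int[of "2^n * J"] by (simp add: power_add)
  then show ?thesis unfolding takagi_tail_def by simp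
qed

lemma dyadic_cell_self: "x \<in> dyadic_cell N x"
proof -
  have "of_int \<lfloor>2^N * x\<rfloor> \<le> 2^N * x" "2^N * x \<le> of_int \<lfloor>(2::real)^N * x\<rfloor> + 1" by linarith+
  then show ?thesis unfolding dyadic_cell_def by (simp add: field_simps)
qed

lemma takagi_term_on_dyadic_cell:
  assumes m: "m < N" and u: "u \<in> dyadic_cell N x"
  shows "dist_int (2^m * u) = (if bdigit x (Suc m) = 0 then 2^m * u - of_int \<lfloor>2^(Suc m) * x\<rfloor> / 2
      else (of_int \<lfloor>2^(Suc m) * x\<rfloor> + 1) / 2 - 2^m * u)"
proof -
  define J where "J = \<lfloor>(2::real)^N * x\<rfloor>"
  define j where "j = \<lfloor>(2::real)^(Suc m) * x\<rfloor>"
  obtain d where N: "N = Suc m + d" using m by (metis less_iff_Suc_add add_Suc)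
  have "2^d * j \<le> J" "J + 1 \<le> 2^d * (j + 1)"
    using floor_pow2_add_ge[of d "Suc m" x] floor_pow2_add_less[of "Suc m" d x] unfolding J_def j_def N
    by simp_all
  then have a: "real_of_int (2^d) * of_int j \<le> of_int J"
    and b: "of_int J + 1 \<le> real_of_int (2^d) * (of_int j + 1)"
    by (metis of_int_le_iff of_int_mult, metis of_int_1 of_int_add of_int_le_iff of_int_mult)
  have p: "(2::real)^m * (of_int J / 2^N) = of_int J / (2 * 2^d)"
    "(2::real)^m * ((of_int J + 1) / 2^N) = (of_int J + 1) / (2 * 2^d)"
    unfolding N by (simp_all add: power_add field_simps)
  have "of_int J / 2^N \<le> u" "u \<le> (of_int J + 1) / 2^N"
    using u unfolding dyadic_cell_def J_def by auto
  then have "2^m * (of_int J / 2^N) \<le> 2^m * u" "2^m * u \<le> 2^m * ((of_int J + 1) / 2^N)"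
    by (intro mult_left_mono; simp)+
  moreover have "of_int j / 2 \<le> of_int J / (2 * (2::real)^d)" "(of_int J + 1) / (2 * 2^d) \<le> (of_int j + 1) / (2::real)"
    using a b by (simp_all add: field_simps)
  ultimately have "of_int j / 2 \<le> 2^m * u" "2^m * u \<le> (of_int j + 1) / 2"
    unfolding p by linarith+
  then have g: "dist_int (2^m * u) = (if even j then 2^m * u - of_int j / 2 else (of_int j + 1) / 2 - 2^m * u)"
    by (rule dist_int_half_interval)
  have "j mod 2 = 0 \<or> j mod 2 = 1" by presburger
  then have "bdigit x (Suc m) = 0 \<longleftrightarrow> even j" unfolding bdigit_def j_def[symmetric]
    by (auto simp: even_iff_mod_2_eq_zero)
  then show ?thesis using g unfolding j_def by simp
qed

lemma takagi_series_diff_dyadic_cell: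
  assumes u: "u \<in> dyadic_cell N x" and v: "v \<in> dyadic_cell N x"
  shows "takagi_series u - takagi_series v
    = digit_discrepancy N x * (u - v) + takagi_tail N u - takagi_tail N v"
proof -
  have "dist_int (2^m * u) / 2^m - dist_int (2^m * v) / 2^m = (1 - 2 * real (bdigit x (Suc m))) * (u - v)"
    if "m < N" for m
    using takagi_term_on_dyadic_cell[OF that u] takagi_term_on_dyadic_cell[OF that v]
      bdigit_0_or_1[of x "Suc m"]
    by (auto simp: field_simps)
  then have "(\<Sum>m<N. dist_int (2^m * u) / 2^m) - (\<Sum>m<N. dist_int (2^m * v) / 2^m)
      = digit_discrepancy N x * (u - v)"
    unfolding digit_discrepancy_def by (simp add: sum_distrib_right flip: sum_subtractf)
  then show ?thesis using takagi_series_split[of u N] takagi_series_split[of v N] by simp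
qed

lemma abs_digit_discrepancy_le: "\<bar>digit_discrepancy N x\<bar> \<le> real N"
proof -
  have "\<bar>digit_discrepancy N x\<bar> \<le> (\<Sum>m<N. \<bar>1 - 2 * real (bdigit x (Suc m))\<bar>)"
    unfolding digit_discrepancy_def by (rule sum_abs)
  also have "\<dots> \<le> (\<Sum>m<N. 1)"
  proof (intro sum_mono)
    fix m show "\<bar>1 - 2 * real (bdigit x (Suc m))\<bar> \<le> 1" using bdigit_0_or_1[of x "Suc m"] by auto
  qed
  finally show ?thesis by simp
qed

lemma takagi_series_one_minus: "takagi_series (1 - u) = takagi_series u"
proof -
  have "dist_int (2^n * (1 - u)) = dist_int (2^n * u)" for n
    using dist_int_of_int_diff[of "2^n" "2^n*u"] by (simp add: algebra_simps)
  then show ?thesis unfolding takagi_series_def by simp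
qed

lemma phi_eq_dist_int: "0 \<le> z \<Longrightarrow> z \<le> 1 \<Longrightarrow> phi z = 2 * dist_int z"
  using dist_int_half_interval[of 0 z] dist_int_half_interval[of 1 z] unfolding phi_def by auto

lemma funpow_phi: "0 \<le> x \<Longrightarrow> x \<le> 1 \<Longrightarrow> (phi ^^ Suc n) x = 2 * dist_int (2^n * x)"
proof (induction n)
  case 0 then show ?case by (simp add: phi_eq_dist_int)
next
  case (Suc n)
  have "(phi ^^ Suc (Suc n)) x = phi (2 * dist_int (2^n * x))" using Suc by simp
  also have "\<dots> = 2 * dist_int (2 * dist_int (2^n * x))"
    using dist_int_nonneg[of "2^n*x"] dist_int_le_half[of "2^n*x"] by (intro phi_eq_dist_int) linarith+
  also have "\<dots> = 2 * dist_int (2^Suc n * x)" by (simp add: dist_int_double_dist_int mult.assoc)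
  finally show ?case .
qed

lemma takagi_eq_takagi_series:
  assumes "0 \<le> x" "x \<le> 1" shows "takagi x = takagi_series x"
proof -
  have "(1/2)^Suc n * (phi ^^ Suc n) x = dist_int (2^n * x) / 2^n" for n
    using funpow_phi[OF assms, of n] by (simp add: power_one_over)
  then show ?thesis unfolding takagi_def takagi_series_def by presburger
qed

section \<open>The difference quotient and the digit discrepancy\<close>

definition log_inv_abs :: "real \<Rightarrow> real" where
  "log_inv_abs h = log 2 (1 / \<bar>h\<bar>)"

definition takagi_quotient :: "real \<Rightarrow> real \<Rightarrow> real" where
  "takagi_quotient x h = (takagi_series (x + h) - takagi_series x) / (h * log_inv_abs h)"

lemma log_inv_abs_minus [simp]: "log_inv_abs (- h) = log_inv_abs h"
  unfolding log_inv_abs_def by simp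

lemma log_inv_abs_pos: "h \<noteq> 0 \<Longrightarrow> \<bar>h\<bar> < 1 \<Longrightarrow> 0 < log_inv_abs h"
  unfolding log_inv_abs_def by simp

lemma log_inv_abs_ge:
  assumes "h \<noteq> 0" "\<bar>h\<bar> \<le> (1/2)^N" shows "real N \<le> log_inv_abs h"
proof -
  have "(2::real)^N \<le> 1 / \<bar>h\<bar>" using assms by (simp add: field_simps power_one_over)
  then have "log 2 (2^N) \<le> log 2 (1 / \<bar>h\<bar>)" using assms by (subst log_le_cancel_iff) auto
  then show ?thesis unfolding log_inv_abs_def by (simp add: log_nat_power)
qed

lemma abs_eq_powr_log_inv_abs: "h \<noteq> 0 \<Longrightarrow> \<bar>h\<bar> = 2 powr (- log_inv_abs h)"
  unfolding log_inv_abs_def by (simp add: powr_minus powr_log_cancel)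

text \<open>From \<open>ln y \<le> y\<close> with \<open>y = 2^-N / t\<close>.\<close>
lemma mult_log_inv_abs_le:
  assumes "0 < t" "t \<le> (1/2)^N"
  shows "t * log_inv_abs t \<le> t * real N + (1/2)^N / ln 2"
proof -
  define a where "a = (1/2::real)^N"
  have a: "0 < a" "t \<le> a" using assms unfolding a_def by auto
  have "1/t = (1/a) * (a/t)" using a assms by (simp add: field_simps)
  then have "log_inv_abs t = log 2 ((1/a) * (a/t))" unfolding log_inv_abs_def using assms by simp
  also have "\<dots> = log 2 (1/a) + log 2 (a/t)" using a assms by (subst log_mult) auto
  finally have "log_inv_abs t = log 2 (1/a) + log 2 (a/t)" .
  moreover have "log 2 (1/a) = real N" unfolding a_def by (simp add: power_one_over log_nat_power)
  moreover have "log 2 (a/t) \<le> (a/t) / ln 2"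
    unfolding log_def using ln_le_minus_one[of "a/t"] a assms by (intro divide_right_mono) auto
  ultimately have "log_inv_abs t \<le> real N + (a/t) / ln 2" by linarith
  then have "t * log_inv_abs t \<le> t * (real N + (a/t) / ln 2)" using assms by (intro mult_left_mono) auto
  also have "\<dots> = t * real N + a / ln 2" using assms by (simp add: field_simps)
  finally show ?thesis unfolding a_def .
qed

lemma takagi_quotient_tendsto_imp_bound:
  assumes lim: "(takagi_quotient x \<longlongrightarrow> c) (at 0)" and e: "e > 0"
  shows "\<exists>d>0. \<forall>h. h \<noteq> 0 \<and> \<bar>h\<bar> < d \<longrightarrow>
    \<bar>takagi_series (x+h) - takagi_series x - c*h*log_inv_abs h\<bar> \<le> e*\<bar>h\<bar>*log_inv_abs h"
proof -
  obtain s where s: "s > 0" "\<forall>h. h \<noteq> 0 \<and> norm (h - 0) < s \<longrightarrow> norm (takagi_quotient x h - c) < e"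
    using lim e unfolding LIM_eq by blast
  show ?thesis
  proof (intro exI[of _ "min s 1"] conjI allI impI)
    fix h assume h: "h \<noteq> 0 \<and> \<bar>h\<bar> < min s 1"
    then have q: "\<bar>takagi_quotient x h - c\<bar> < e" using s by simp
    have L: "0 < log_inv_abs h" using h by (intro log_inv_abs_pos) auto
    have "takagi_series (x+h) - takagi_series x - c*h*log_inv_abs h = (takagi_quotient x h - c) * (h * log_inv_abs h)"
      unfolding takagi_quotient_def using h L by (simp add: field_simps)
    then have "\<bar>takagi_series (x+h) - takagi_series x - c*h*log_inv_abs h\<bar>
        = \<bar>takagi_quotient x h - c\<bar> * (\<bar>h\<bar> * log_inv_abs h)"
      using L by (simp add: abs_mult)
    also have "\<dots> \<le> e * (\<bar>h\<bar> * log_inv_abs h)" using q L h by (intro mult_right_mono) auto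
    finally show "\<bar>takagi_series (x+h) - takagi_series x - c*h*log_inv_abs h\<bar> \<le> e*\<bar>h\<bar>*log_inv_abs h"
      by simp
  qed (use s in simp)
qed

lemma takagi_series_diff_dyadic_endpoints:
  "takagi_series ((of_int \<lfloor>2^N * x\<rfloor> + 1) / 2^N) - takagi_series (of_int \<lfloor>2^N * x\<rfloor> / 2^N)
    = digit_discrepancy N x / 2^N"
proof -
  define J where "J = \<lfloor>(2::real)^N * x\<rfloor>"
  have "of_int J / 2^N \<le> (of_int J + 1) / (2::real)^N" by (intro divide_right_mono) auto
  then have "(of_int J + 1) / 2^N \<in> dyadic_cell N x" "of_int J / 2^N \<in> dyadic_cell N x"
    unfolding dyadic_cell_def J_def by auto
  from takagi_series_diff_dyadic_cell[OF this] show ?thesis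
    using takagi_tail_dyadic[of N "J + 1"] takagi_tail_dyadic[of N J] unfolding J_def
    by (simp add: field_simps)
qed

lemma log_inv_abs_split_bounds:
  assumes "0 < s" "0 < t" "s + t = (1/2)^N"
  shows "real N * (1/2)^N \<le> s * log_inv_abs s + t * log_inv_abs t"
    and "s * log_inv_abs s + t * log_inv_abs t \<le> real N * (1/2)^N + 2 * (1/2)^N / ln 2"
proof -
  have "s \<le> (1/2)^N" "t \<le> (1/2)^N" using assms by linarith+
  then have "s * real N \<le> s * log_inv_abs s" "t * real N \<le> t * log_inv_abs t"
    using assms log_inv_abs_ge[of s N] log_inv_abs_ge[of t N] by (auto intro: mult_left_mono)
  moreover have "real N * (1/2)^N = s * real N + t * real N"
    by (simp add: algebra_simps flip: assms(3))
  ultimately show "real N * (1/2)^N \<le> s * log_inv_abs s + t * log_inv_abs t" by linarith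
  have "s * log_inv_abs s + t * log_inv_abs t \<le> (s * real N + (1/2)^N / ln 2) + (t * real N + (1/2)^N / ln 2)"
    using mult_log_inv_abs_le[of s N] mult_log_inv_abs_le[of t N] assms \<open>s \<le> _\<close> \<open>t \<le> _\<close>
    by linarith
  also have "\<dots> = real N * (1/2)^N + 2 * (1/2)^N / ln 2"
    by (simp add: algebra_simps flip: assms(3))
  finally show "s * log_inv_abs s + t * log_inv_abs t \<le> real N * (1/2)^N + 2 * (1/2)^N / ln 2" .
qed

text \<open>Apply the approximate linearisation at both endpoints of the dyadic cell of level \<open>N\<close>.\<close>
lemma discrepancy_close_of_bound:
  assumes nd: "\<not> dyadic x" and e: "0 \<le> e"
    and bound: "\<And>h. h \<noteq> 0 \<Longrightarrow> \<bar>h\<bar> < d \<Longrightarrow>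
      \<bar>takagi_series (x+h) - takagi_series x - c*h*log_inv_abs h\<bar> \<le> e*\<bar>h\<bar>*log_inv_abs h"
    and N: "(1/2)^N < d"
  shows "\<bar>digit_discrepancy N x - c * real N\<bar> \<le> e * real N + 2 * (e + \<bar>c\<bar>) / ln 2"
proof -
  define a where "a = (1/2::real)^N"
  define f where "f = frac (2^N * x)"
  have f: "0 < f" "f < 1" unfolding f_def using frac_pow2_pos[OF nd] frac_lt_1 by auto
  define s where "s = (1 - f) * a"
  define t where "t = f * a"
  have st: "0 < s" "0 < t" "s + t = a" "s \<le> a" "t \<le> a"
    using f unfolding s_def t_def a_def by (auto simp: algebra_simps)
  have endpoints: "x + s = (of_int \<lfloor>2^N * x\<rfloor> + 1) / 2^N" "x + (- t) = of_int \<lfloor>2^N * x\<rfloor> / 2^N"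
    unfolding s_def t_def a_def f_def frac_def by (simp_all add: field_simps power_one_over)
  define S where "S = s * log_inv_abs s + t * log_inv_abs t"
  have S: "real N * a \<le> S" "S \<le> real N * a + 2 * a / ln 2"
    using log_inv_abs_split_bounds[of s t N] st unfolding S_def a_def by auto
  have bs: "\<bar>takagi_series (x+s) - takagi_series x - c*s*log_inv_abs s\<bar> \<le> e*s*log_inv_abs s"
    and bt: "\<bar>takagi_series (x+(-t)) - takagi_series x + c*t*log_inv_abs t\<bar> \<le> e*t*log_inv_abs t"
    using bound[of s] bound[of "-t"] st N unfolding a_def by auto
  have "digit_discrepancy N x * a = takagi_series (x + s) - takagi_series (x + (- t))"
    unfolding endpoints takagi_series_diff_dyadic_endpoints a_def by (simp add: power_one_over)
  then have "digit_discrepancy N x * a - c * S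
      = (takagi_series (x+s) - takagi_series x - c*s*log_inv_abs s)
        - (takagi_series (x+(-t)) - takagi_series x + c*t*log_inv_abs t)"
    unfolding S_def by (simp add: algebra_simps)
  then have "\<bar>digit_discrepancy N x * a - c * S\<bar> \<le> e*s*log_inv_abs s + e*t*log_inv_abs t"
    using bs bt by linarith
  then have m1: "\<bar>digit_discrepancy N x * a - c * S\<bar> \<le> e * S"
    unfolding S_def by (simp add: algebra_simps)
  have "\<bar>c * S - c * (real N * a)\<bar> = \<bar>c\<bar> * \<bar>S - real N * a\<bar>"
    by (simp add: abs_mult[symmetric] algebra_simps)
  also have "\<dots> \<le> \<bar>c\<bar> * (2 * a / ln 2)" using S by (intro mult_left_mono) auto
  finally have m2: "\<bar>c * S - c * (real N * a)\<bar> \<le> \<bar>c\<bar> * (2 * a / ln 2)" .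
  have m3: "e * S \<le> e * (real N * a + 2 * a / ln 2)" using S e by (intro mult_left_mono) auto
  have "\<bar>digit_discrepancy N x * a - c * (real N * a)\<bar> = \<bar>a * (digit_discrepancy N x - c * real N)\<bar>"
    by (simp add: algebra_simps)
  then have "a * \<bar>digit_discrepancy N x - c * real N\<bar> = \<bar>digit_discrepancy N x * a - c * (real N * a)\<bar>"
    using st by (simp add: abs_mult)
  also have "\<dots> \<le> e * (real N * a + 2 * a / ln 2) + \<bar>c\<bar> * (2 * a / ln 2)"
    using m1 m2 m3 by linarith
  also have "\<dots> = a * (e * real N + 2 * (e + \<bar>c\<bar>) / ln 2)" by (simp add: field_simps)
  finally show ?thesis using st by simp
qed

lemma discrepancy_tendsto_of_takagi_quotient:
  assumes nd: "\<not> dyadic x" and lim: "(takagi_quotient x \<longlongrightarrow> c) (at 0)"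
  shows "(\<lambda>N. digit_discrepancy N x / real N) \<longlonglongrightarrow> c"
proof (rule LIMSEQ_I)
  fix r :: real assume r: "0 < r"
  define e where "e = r / 2"
  define K where "K = 2 * (e + \<bar>c\<bar>) / ln 2"
  obtain d where "d > 0" and bound: "\<forall>h. h \<noteq> 0 \<and> \<bar>h\<bar> < d \<longrightarrow>
      \<bar>takagi_series (x+h) - takagi_series x - c*h*log_inv_abs h\<bar> \<le> e*\<bar>h\<bar>*log_inv_abs h"
    using takagi_quotient_tendsto_imp_bound[OF lim, of e] r unfolding e_def by auto
  obtain N1 where N1: "(1/2::real)^N1 < d" using real_arch_pow_inv[OF \<open>d > 0\<close>, of "1/2"] by auto
  obtain N2 where N2: "K / e < real N2" using reals_Archimedean2 by blast
  show "\<exists>N0. \<forall>N\<ge>N0. norm (digit_discrepancy N x / real N - c) < r"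
  proof (intro exI[of _ "max (max N1 N2) 1"] allI impI)
    fix N assume N: "max (max N1 N2) 1 \<le> N"
    have "(1/2::real)^N \<le> (1/2)^N1" using N by (intro power_decreasing) auto
    then have "(1/2::real)^N < d" using N1 by linarith
    then have close: "\<bar>digit_discrepancy N x - c * real N\<bar> \<le> e * real N + K"
      unfolding K_def using bound r e_def by (intro discrepancy_close_of_bound[OF nd]) auto
    have "K < e * real N2" using N2 r by (simp add: field_simps e_def)
    moreover have "e * real N2 \<le> e * real N" using N r by (intro mult_left_mono) (auto simp: e_def)
    ultimately have "K < e * real N" by linarith
    moreover have "\<bar>digit_discrepancy N x / real N - c\<bar> = \<bar>digit_discrepancy N x - c * real N\<bar> / real N"
      using N by (simp add: field_simps abs_divide)
    ultimately show "norm (digit_discrepancy N x / real N - c) < r"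
      using close N by (simp add: field_simps e_def)
  qed
qed

section \<open>Runs of equal digits and the limit of the quotient\<close>

definition sublinear_zero_runs :: "real \<Rightarrow> bool" where
  "sublinear_zero_runs y \<longleftrightarrow>
     (\<forall>\<epsilon>>0. \<forall>\<^sub>F N in sequentially. \<exists>j. 1 \<le> j \<and> real j \<le> \<epsilon> * real N + 1 \<and> bdigit y (N + j) = 1)"

lemma frac_pow2_ge_of_sublinear_zero_runs:
  assumes "sublinear_zero_runs y" "0 < \<epsilon>"
  shows "\<forall>\<^sub>F N in sequentially. 2 powr (-(\<epsilon> * real N + 1)) \<le> frac ((2::real)^N * y)"
  using assms unfolding sublinear_zero_runs_def
proof (elim allE impE eventually_mono)
  fix N assume "\<exists>j. 1 \<le> j \<and> real j \<le> \<epsilon> * real N + 1 \<and> bdigit y (N + j) = 1"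
  then obtain j where j: "1 \<le> j" "real j \<le> \<epsilon> * real N + 1" "bdigit y (N + j) = 1" by blast
  have "2 powr (-(\<epsilon> * real N + 1)) \<le> 2 powr (- real j)" by (rule powr_mono) (use j in auto)
  also have "\<dots> = (1/2)^j" by (simp add: powr_minus powr_realpow power_one_over inverse_eq_divide)
  also have "\<dots> \<le> frac (2^N * y)" by (rule frac_pow2_ge_digit[OF j(1) j(3)])
  finally show "2 powr (-(\<epsilon> * real N + 1)) \<le> frac (2^N * y)" .
qed (use assms in auto)

lemma takagi_series_local_expansion:
  assumes "\<bar>h\<bar> \<le> frac (2^N * x) / 2^N" "\<bar>h\<bar> \<le> (1 - frac (2^N * x)) / 2^N"
    and "N \<le> M" "(1/2)^M \<le> \<bar>h\<bar>"
  shows "\<bar>takagi_series (x + h) - takagi_series x - digit_discrepancy N x * h\<bar> \<le> (real (M - N) + 1) * \<bar>h\<bar>"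
proof -
  have "of_int \<lfloor>2^N * x\<rfloor> / 2^N = x - frac (2^N * x) / (2::real)^N"
    "(of_int \<lfloor>2^N * x\<rfloor> + 1) / 2^N = x + (1 - frac (2^N * x)) / (2::real)^N"
    unfolding frac_def by (simp_all add: field_simps)
  then have "x + h \<in> dyadic_cell N x" using assms(1,2) unfolding dyadic_cell_def by auto
  from takagi_series_diff_dyadic_cell[OF this dyadic_cell_self]
  have "takagi_series (x + h) - takagi_series x - digit_discrepancy N x * h
      = takagi_tail N (x + h) - takagi_tail N x" by simp
  moreover have "\<bar>takagi_tail N (x + h) - takagi_tail N x\<bar> \<le> real (M - N) * \<bar>h\<bar> + (1/2)^M"
    using takagi_tail_diff[of N "x + h" x "M - N"] assms(3) by simp
  ultimately show ?thesis using assms(4) by (simp add: algebra_simps)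
qed

text \<open>The level \<open>N \<approx> L / (1 + \<epsilon>)\<close> at which to expand for \<open>|h| = 2^-L\<close>: the margin \<open>\<epsilon> N\<close>
  leaves room for the zero and one runs after position \<open>N\<close>.\<close>
lemma exists_level_for_log_scale:
  assumes "0 < \<epsilon>" "1 \<le> L"
  shows "\<exists>N. real N * (1 + \<epsilon>) + 1 \<le> L \<and> L - real N \<le> \<epsilon> * L + 2"
proof
  define q where "q = (L - 1) / (1 + \<epsilon>)"
  have "0 \<le> q" using assms unfolding q_def by simp
  then have N: "real (nat \<lfloor>q\<rfloor>) \<le> q" "q < real (nat \<lfloor>q\<rfloor>) + 1" by linarith+
  show "real (nat \<lfloor>q\<rfloor>) * (1 + \<epsilon>) + 1 \<le> L \<and> L - real (nat \<lfloor>q\<rfloor>) \<le> \<epsilon> * L + 2"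
  proof
    have "real (nat \<lfloor>q\<rfloor>) * (1 + \<epsilon>) \<le> q * (1 + \<epsilon>)" using N assms by (intro mult_right_mono) auto
    also have "\<dots> = L - 1" using assms unfolding q_def by simp
    finally show "real (nat \<lfloor>q\<rfloor>) * (1 + \<epsilon>) + 1 \<le> L" by simp
    have "L - q = (\<epsilon> * L + 1) / (1 + \<epsilon>)" using assms unfolding q_def by (simp add: field_simps)
    also have "\<dots> \<le> \<epsilon> * L + 1" using assms by (simp add: field_simps)
    finally show "L - real (nat \<lfloor>q\<rfloor>) \<le> \<epsilon> * L + 2" using N by linarith
  qed
qed

lemma takagi_quotient_estimate:
  assumes h: "h \<noteq> 0" and \<epsilon>: "0 < \<epsilon>" and c: "\<bar>c\<bar> \<le> 1"
    and runs: "2 powr (-(\<epsilon> * real N + 1)) \<le> frac (2^N * x)"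
      "2 powr (-(\<epsilon> * real N + 1)) \<le> 1 - frac (2^N * x)"
    and level: "real N * (1 + \<epsilon>) + 1 \<le> log_inv_abs h" "log_inv_abs h - real N \<le> \<epsilon> * log_inv_abs h + 2"
    and disc: "\<bar>digit_discrepancy N x - c * real N\<bar> \<le> \<epsilon> * real N"
  shows "\<bar>takagi_quotient x h - c\<bar> \<le> 3 * \<epsilon> + 6 / log_inv_abs h"
proof -
  define L where "L = log_inv_abs h"
  have "0 \<le> real N * \<epsilon>" using \<epsilon> by simp
  then have L: "1 \<le> L" "real N \<le> L" using level(1) unfolding L_def by (simp_all add: algebra_simps)
  have habs: "\<bar>h\<bar> = 2 powr (- L)" unfolding L_def using h by (rule abs_eq_powr_log_inv_abs)
  have "\<bar>h\<bar> \<le> 2 powr (- (real N + (\<epsilon> * real N + 1)))"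
    unfolding habs using level(1) unfolding L_def by (intro powr_mono) (auto simp: algebra_simps)
  also have "\<dots> = 2 powr (-(\<epsilon> * real N + 1)) * 2 powr (- real N)"
    by (simp add: powr_add[symmetric] add.commute)
  also have "\<dots> = 2 powr (-(\<epsilon> * real N + 1)) / 2^N"
    by (simp add: powr_minus powr_realpow divide_inverse)
  finally have "\<bar>h\<bar> \<le> 2 powr (-(\<epsilon> * real N + 1)) / 2^N" .
  then have cell: "\<bar>h\<bar> \<le> frac (2^N * x) / 2^N" "\<bar>h\<bar> \<le> (1 - frac (2^N * x)) / 2^N"
    using runs divide_right_mono[OF runs(1), of "2^N"] divide_right_mono[OF runs(2), of "2^N"] by auto
  define M where "M = nat \<lceil>L\<rceil>"
  have M: "L \<le> real M" "real M \<le> L + 1" "N \<le> M" unfolding M_def using L by linarith+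
  have "(1/2::real)^M = 2 powr (- real M)" by (simp add: powr_minus powr_realpow power_one_over inverse_eq_divide)
  also have "\<dots> \<le> \<bar>h\<bar>" unfolding habs using M by simp
  finally have hM: "(1/2)^M \<le> \<bar>h\<bar>" .
  have "real (M - N) + 1 \<le> \<epsilon> * L + 4" using M level(2) unfolding L_def[symmetric] by (simp add: of_nat_diff)
  then have E: "\<bar>takagi_series (x + h) - takagi_series x - digit_discrepancy N x * h\<bar> \<le> (\<epsilon> * L + 4) * \<bar>h\<bar>"
    using takagi_series_local_expansion[OF cell M(3) hM] by (meson abs_ge_zero mult_right_mono order_trans)
  have "\<bar>c * real N - c * L\<bar> = \<bar>c\<bar> * \<bar>L - real N\<bar>"
    by (simp add: abs_mult[symmetric] algebra_simps)
  also have "\<dots> = \<bar>c\<bar> * (L - real N)" using L by simp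
  also have "\<dots> \<le> 1 * (L - real N)" using c L by (intro mult_right_mono) auto
  finally have "\<bar>c * real N - c * L\<bar> \<le> \<epsilon> * L + 2" using level(2) unfolding L_def by simp
  moreover have "\<epsilon> * real N \<le> \<epsilon> * L" using L \<epsilon> by (intro mult_left_mono) auto
  ultimately have D: "\<bar>digit_discrepancy N x - c * L\<bar> \<le> 2 * \<epsilon> * L + 2"
    using disc abs_triangle_ineq[of "digit_discrepancy N x - c * real N" "c * real N - c * L"] by simp
  have "takagi_quotient x h - c = (takagi_series (x + h) - takagi_series x - digit_discrepancy N x * h) / (h * L)
      + (digit_discrepancy N x - c * L) / L"
    unfolding takagi_quotient_def L_def[symmetric] using h L by (simp add: field_simps)
  also have "\<bar>\<dots>\<bar> \<le> \<bar>takagi_series (x + h) - takagi_series x - digit_discrepancy N x * h\<bar> / (\<bar>h\<bar> * L)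
      + \<bar>digit_discrepancy N x - c * L\<bar> / L"
    using L abs_triangle_ineq[of "(takagi_series (x + h) - takagi_series x - digit_discrepancy N x * h) / (h * L)"
        "(digit_discrepancy N x - c * L) / L"]
    by (simp add: abs_divide abs_mult)
  also have "\<dots> \<le> ((\<epsilon> * L + 4) * \<bar>h\<bar>) / (\<bar>h\<bar> * L) + (2 * \<epsilon> * L + 2) / L"
    using E D L h by (intro add_mono divide_right_mono) auto
  also have "\<dots> = 3 * \<epsilon> + 6 / L" using h L by (simp add: field_simps)
  finally show ?thesis unfolding L_def .
qed

lemma takagi_quotient_tendsto_of_sublinear_runs:
  assumes nd: "\<not> dyadic x" and disc: "(\<lambda>N. digit_discrepancy N x / real N) \<longlonglongrightarrow> c" and c: "\<bar>c\<bar> \<le> 1"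
    and runs: "sublinear_zero_runs x" "sublinear_zero_runs (1 - x)"
  shows "(takagi_quotient x \<longlongrightarrow> c) (at 0)"
  unfolding LIM_eq
proof (intro allI impI)
  fix r :: real assume r: "0 < r"
  define \<epsilon> where "\<epsilon> = min (r / 8) (1 / 2)"
  have \<epsilon>: "0 < \<epsilon>" "\<epsilon> \<le> r / 8" "\<epsilon> \<le> 1 / 2" using r unfolding \<epsilon>_def by auto
  have "\<forall>\<^sub>F N in sequentially. 2 powr (-(\<epsilon> * real N + 1)) \<le> frac (2^N * x)
      \<and> 2 powr (-(\<epsilon> * real N + 1)) \<le> 1 - frac (2^N * x)
      \<and> \<bar>digit_discrepancy N x / real N - c\<bar> < \<epsilon>"
    using frac_pow2_ge_of_sublinear_zero_runs[OF runs(1) \<epsilon>(1)]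
      frac_pow2_ge_of_sublinear_zero_runs[OF runs(2) \<epsilon>(1)] tendstoD[OF disc \<epsilon>(1)]
    by eventually_elim (simp add: frac_pow2_one_minus[OF nd] dist_real_def)
  then obtain N0 where N0: "\<And>N. N0 \<le> N \<Longrightarrow> 2 powr (-(\<epsilon> * real N + 1)) \<le> frac (2^N * x)
      \<and> 2 powr (-(\<epsilon> * real N + 1)) \<le> 1 - frac (2^N * x)
      \<and> \<bar>digit_discrepancy N x / real N - c\<bar> < \<epsilon>"
    unfolding eventually_sequentially by blast
  define Lmin where "Lmin = max (2 * real N0 + 4) (16 / r)"
  show "\<exists>s>0. \<forall>h. h \<noteq> 0 \<and> norm (h - 0) < s \<longrightarrow> norm (takagi_quotient x h - c) < r"
  proof (intro exI[of _ "2 powr (- Lmin)"] conjI allI impI)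
    fix h :: real assume h: "h \<noteq> 0 \<and> norm (h - 0) < 2 powr (- Lmin)"
    define L where "L = log_inv_abs h"
    have "2 powr (- L) < 2 powr (- Lmin)" using h abs_eq_powr_log_inv_abs[of h] unfolding L_def by simp
    then have L: "2 * real N0 + 4 < L" "16 / r < L" unfolding Lmin_def by auto
    obtain N where level: "real N * (1 + \<epsilon>) + 1 \<le> L" "L - real N \<le> \<epsilon> * L + 2"
      using exists_level_for_log_scale[OF \<epsilon>(1), of L] L by auto
    have "\<epsilon> * L \<le> (1/2) * L" using \<epsilon> L by (intro mult_right_mono) auto
    then have N: "N0 \<le> N" "0 < real N" using level(2) L by linarith+
    have "\<bar>digit_discrepancy N x - c * real N\<bar> = real N * \<bar>digit_discrepancy N x / real N - c\<bar>"
      using N by (simp add: abs_mult[symmetric] field_simps)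
    also have "\<dots> \<le> real N * \<epsilon>" using N0[OF N(1)] N by (intro mult_left_mono) auto
    finally have "\<bar>digit_discrepancy N x - c * real N\<bar> \<le> \<epsilon> * real N" by (simp add: mult.commute)
    then have "\<bar>takagi_quotient x h - c\<bar> \<le> 3 * \<epsilon> + 6 / L"
      using takagi_quotient_estimate[of h \<epsilon> c N x] N0[OF N(1)] level h \<epsilon> c unfolding L_def by auto
    moreover have "6 / L < 3 * r / 8" using L r by (simp add: field_simps)
    ultimately show "norm (takagi_quotient x h - c) < r" using \<epsilon> by simp
  qed simp
qed

section \<open>Digit densities\<close>

lemma digit_avg_bounds: "0 \<le> digit_avg y n" "digit_avg y n \<le> 1"
proof -
  have "(\<Sum>k=1..n. real (bdigit y k)) \<le> (\<Sum>k=1..n. 1)" using bdigit_le_1 by (intro sum_mono) auto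
  moreover have "0 \<le> (\<Sum>k=1..n. real (bdigit y k))" by (intro sum_nonneg) auto
  ultimately show "0 \<le> digit_avg y n" "digit_avg y n \<le> 1"
    unfolding digit_avg_def by (cases "n = 0"; simp add: field_simps)+
qed

lemma d1_bounds:
  assumes "convergent (digit_avg y)" shows "0 \<le> d1 y" "d1 y \<le> 1"
proof -
  have l: "digit_avg y \<longlonglongrightarrow> d1 y" using assms unfolding d1_def by (simp add: convergent_LIMSEQ_iff)
  show "0 \<le> d1 y" by (rule LIMSEQ_le_const[OF l]) (use digit_avg_bounds in auto)
  show "d1 y \<le> 1" by (rule LIMSEQ_le_const2[OF l]) (use digit_avg_bounds in auto)
qed

lemma digit_discrepancy_div_eq: "1 \<le> N \<Longrightarrow> digit_discrepancy N y / real N = 1 - 2 * digit_avg y N"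
  unfolding digit_discrepancy_def digit_avg_def
  by (simp add: sum_subtractf sum_distrib_left sum.atLeast1_atMost_eq field_simps)

lemma discrepancy_tendsto_of_convergent:
  assumes "convergent (digit_avg y)"
  shows "(\<lambda>N. digit_discrepancy N y / real N) \<longlonglongrightarrow> 1 - 2 * d1 y"
proof -
  have "(\<lambda>n. 1 - 2 * digit_avg y n) \<longlonglongrightarrow> 1 - 2 * d1 y"
    using assms unfolding d1_def by (intro tendsto_intros) (simp add: convergent_LIMSEQ_iff)
  moreover have "\<forall>\<^sub>F n in sequentially. 1 - 2 * digit_avg y n = digit_discrepancy n y / real n"
    using digit_discrepancy_div_eq by (intro eventually_sequentiallyI[of 1]) auto
  ultimately show ?thesis by (rule Lim_transform_eventually)
qed

lemma convergent_of_discrepancy_tendsto: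
  assumes "(\<lambda>N. digit_discrepancy N y / real N) \<longlonglongrightarrow> c"
  shows "convergent (digit_avg y)" "d1 y = (1 - c) / 2"
proof -
  have "(\<lambda>n. (1 - digit_discrepancy n y / real n) / 2) \<longlonglongrightarrow> (1 - c) / 2"
    by (intro tendsto_intros assms) simp
  moreover have "\<forall>\<^sub>F n in sequentially. (1 - digit_discrepancy n y / real n) / 2 = digit_avg y n"
    using digit_discrepancy_div_eq by (intro eventually_sequentiallyI[of 1]) auto
  ultimately have l: "digit_avg y \<longlonglongrightarrow> (1 - c) / 2" by (rule Lim_transform_eventually)
  then show "convergent (digit_avg y)" by (auto simp: convergent_def)
  show "d1 y = (1 - c) / 2" unfolding d1_def using limI[OF l] .
qed

lemma digit_avg_one_minus:
  assumes nd: "\<not> dyadic y" and n: "1 \<le> n"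
  shows "digit_avg (1 - y) n = 1 - digit_avg y n"
proof -
  have "(\<Sum>k=1..n. real (bdigit (1 - y) k)) = (\<Sum>k=1..n. 1 - real (bdigit y k))"
    using bdigit_one_minus[OF nd] bdigit_le_1[of y] by (intro sum.cong) (auto simp: of_nat_diff)
  then show ?thesis unfolding digit_avg_def using n by (simp add: sum_subtractf field_simps)
qed

lemma convergent_digit_avg_one_minus:
  assumes nd: "\<not> dyadic y" and conv: "convergent (digit_avg y)"
  shows "convergent (digit_avg (1 - y))" "d1 (1 - y) = 1 - d1 y"
proof -
  have "(\<lambda>n. 1 - digit_avg y n) \<longlonglongrightarrow> 1 - d1 y"
    using conv unfolding d1_def by (intro tendsto_intros) (simp add: convergent_LIMSEQ_iff)
  moreover have "\<forall>\<^sub>F n in sequentially. 1 - digit_avg y n = digit_avg (1 - y) n"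
    using digit_avg_one_minus[OF nd] by (intro eventually_sequentiallyI[of 1]) auto
  ultimately have l: "digit_avg (1 - y) \<longlonglongrightarrow> 1 - d1 y" by (rule Lim_transform_eventually)
  then show "convergent (digit_avg (1 - y))" by (auto simp: convergent_def)
  show "d1 (1 - y) = 1 - d1 y" using limI[OF l] by (simp add: d1_def)
qed

lemma sum_bdigit_zero_run:
  assumes "\<And>i. 1 \<le> i \<Longrightarrow> i \<le> r \<Longrightarrow> bdigit y (N+i) = 0"
  shows "(\<Sum>k=1..N+r. real (bdigit y k)) = (\<Sum>k=1..N. real (bdigit y k))"
proof -
  have "(\<Sum>k=N+1..N+r. real (bdigit y k)) = 0"
    using assms[of "k - N" for k] by (intro sum.neutral) (auto simp: Suc_le_eq)
  then show ?thesis using sum.ub_add_nat[of 1 N "\<lambda>k. real (bdigit y k)" r] by simp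
qed

text \<open>A run of \<open>r\<close> zeros after position \<open>N\<close> changes \<open>n \<cdot> avg n\<close> by nothing, which is
  incompatible with a positive limit of the averages once \<open>r > \<epsilon> N\<close>.\<close>
lemma sublinear_zero_runs_of_d1_pos:
  assumes conv: "convergent (digit_avg y)" and pos: "0 < d1 y"
  shows "sublinear_zero_runs y"
  unfolding sublinear_zero_runs_def
proof (intro allI impI)
  fix \<epsilon> :: real assume \<epsilon>: "\<epsilon> > 0"
  define d where "d = d1 y"
  define \<eta> where "\<eta> = min (d/2) (\<epsilon> * d / 4)"
  have \<eta>: "0 < \<eta>" "\<eta> \<le> d / 2" "\<eta> \<le> \<epsilon> * d / 4" using pos \<epsilon> unfolding \<eta>_def d_def by auto
  have "\<forall>\<^sub>F n in sequentially. \<bar>digit_avg y n - d\<bar> < \<eta> \<and> 1 \<le> n"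
    using tendstoD[of "digit_avg y" d sequentially \<eta>] conv \<eta>(1) eventually_ge_at_top[of 1]
    unfolding d_def d1_def by (auto simp: convergent_LIMSEQ_iff dist_real_def elim: eventually_conj)
  then obtain N0 where N0: "\<And>n. N0 \<le> n \<Longrightarrow> \<bar>digit_avg y n - d\<bar> < \<eta> \<and> 1 \<le> n"
    unfolding eventually_sequentially by blast
  show "\<forall>\<^sub>F N in sequentially. \<exists>j. 1 \<le> j \<and> real j \<le> \<epsilon> * real N + 1 \<and> bdigit y (N + j) = 1"
    unfolding eventually_sequentially
  proof (rule exI[of _ N0], intro allI impI)
    fix N assume N: "N0 \<le> N"
    define r where "r = nat \<lfloor>\<epsilon> * real N\<rfloor> + 1"
    have "real r = real_of_int \<lfloor>\<epsilon> * real N\<rfloor> + 1" unfolding r_def using \<epsilon> by simp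
    then have r: "real r \<le> \<epsilon> * real N + 1" "\<epsilon> * real N < real r" by linarith+
    show "\<exists>j. 1 \<le> j \<and> real j \<le> \<epsilon> * real N + 1 \<and> bdigit y (N + j) = 1"
    proof (rule ccontr)
      assume "\<not> ?thesis"
      then have "\<And>i. 1 \<le> i \<Longrightarrow> i \<le> r \<Longrightarrow> bdigit y (N+i) = 0"
        using r bdigit_0_or_1 by (smt (verit, best) of_nat_le_iff)
      then have "real (N + r) * digit_avg y (N + r) = real N * digit_avg y N"
        using sum_bdigit_zero_run N0[OF N] unfolding digit_avg_def by simp
      moreover have "\<bar>digit_avg y N - d\<bar> < \<eta>" "\<bar>digit_avg y (N + r) - d\<bar> < \<eta>" "1 \<le> N"
        using N0[of N] N0[of "N + r"] N by auto
      ultimately have "(d - \<eta>) * real (N + r) < (d + \<eta>) * real N"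
        by (smt (verit, best) mult_strict_left_mono mult_strict_right_mono of_nat_0_less_iff
            add_gr_0 less_le_trans zero_less_one mult.commute)
      then have "(d - \<eta>) * real r < 2 * \<eta> * real N" by (simp add: algebra_simps)
      moreover have "d / 2 * (\<epsilon> * real N) \<le> (d - \<eta>) * real r"
        using r \<eta> pos \<epsilon> unfolding d_def by (intro mult_mono) auto
      moreover have "2 * \<eta> * real N \<le> (d / 2 * \<epsilon>) * real N"
        using \<eta> by (intro mult_right_mono) (auto simp: mult.commute)
      ultimately show False by linarith
    qed
  qed
qed

definition one_positions :: "real \<Rightarrow> nat set" where
  "one_positions y = {k. 1 \<le> k \<and> bdigit y k = 1}"

lemma apos_Suc: "apos y (Suc n) = enumerate (one_positions y) n"
  unfolding apos_def one_positions_def by simp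

lemma infinite_one_positions:
  assumes "\<not> dyadic y" shows "infinite (one_positions y)"
proof
  assume "finite (one_positions y)"
  then obtain K where K: "one_positions y \<subseteq> {..<K}" using finite_nat_bounded by blast
  have zeros: "bdigit y (K + i) = 0" if "1 \<le> i" for i
  proof -
    have "K + i \<notin> one_positions y" using K by auto
    then show ?thesis using bdigit_0_or_1[of y "K + i"] that unfolding one_positions_def by auto
  qed
  obtain j where "(1/2::real)^j < frac (2^K * y)"
    using real_arch_pow_inv[OF frac_pow2_pos[OF assms, of K], of "1/2"] by auto
  moreover have "frac (2^K * y) < (1/2::real)^j" by (rule frac_pow2_less_zero_digits) (use zeros in auto)
  ultimately show False by simp
qed

text \<open>The next digit 1 after position \<open>N\<close> is some \<open>a\<^sub>n\<^sub>+\<^sub>1 \<le> (1 + \<epsilon>) a\<^sub>n \<le> (1 + \<epsilon>) N\<close>.\<close>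
lemma sublinear_zero_runs_of_ratio:
  assumes nd: "\<not> dyadic y" and ratio: "(\<lambda>n. real (apos y (Suc n)) / real (apos y n)) \<longlonglongrightarrow> 1"
  shows "sublinear_zero_runs y"
  unfolding sublinear_zero_runs_def
proof (intro allI impI)
  fix \<epsilon> :: real assume \<epsilon>: "\<epsilon> > 0"
  define e where "e = enumerate (one_positions y)"
  have inf: "infinite (one_positions y)" by (rule infinite_one_positions[OF nd])
  have eS: "e n \<in> one_positions y" for n unfolding e_def by (rule enumerate_in_set[OF inf])
  have e1: "1 \<le> e n" for n using eS[of n] unfolding one_positions_def by auto
  obtain n0 where n0: "\<And>n. n0 \<le> n \<Longrightarrow> \<bar>real (apos y (Suc n)) / real (apos y n) - 1\<bar> < \<epsilon>"
    using LIMSEQ_D[OF ratio \<epsilon>] by auto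
  show "\<forall>\<^sub>F N in sequentially. \<exists>j. 1 \<le> j \<and> real j \<le> \<epsilon> * real N + 1 \<and> bdigit y (N + j) = 1"
    unfolding eventually_sequentially
  proof (rule exI[of _ "e (max n0 1)"], intro allI impI)
    fix N assume N: "e (max n0 1) \<le> N"
    have ex: "\<exists>k. k \<in> one_positions y \<and> N < k" using inf unfolding infinite_nat_iff_unbounded by blast
    define k where "k = (LEAST k. k \<in> one_positions y \<and> N < k)"
    have "k \<in> one_positions y" "N < k" using LeastI_ex[OF ex] unfolding k_def by auto
    moreover obtain i where i: "e i = k" using enumerate_Ex[OF inf \<open>k \<in> one_positions y\<close>] unfolding e_def by blast
    ultimately have k: "N < e i"
      and least: "\<And>k'. k' \<in> one_positions y \<Longrightarrow> N < k' \<Longrightarrow> e i \<le> k'"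
      unfolding i k_def by (auto intro: Least_le)
    have "e (max n0 1) < e i" using N k by simp
    then have "max n0 1 < i" unfolding e_def using inf by simp
    then obtain m where m: "i = Suc m" "n0 \<le> i" by (cases i) auto
    have "e m < e i" unfolding e_def m using inf by simp
    then have em: "e m \<le> N" using least[OF eS[of m]] by linarith
    have "real (e i) / real (e m) < 1 + \<epsilon>"
      using n0[OF m(2)] unfolding apos_Suc e_def[symmetric] m(1) by simp
    then have "real (e i) < (1 + \<epsilon>) * real (e m)" using e1[of m] by (simp add: field_simps)
    also have "\<dots> \<le> (1 + \<epsilon>) * real N" using em \<epsilon> by (intro mult_left_mono) auto
    finally have ki: "real (e i) < (1 + \<epsilon>) * real N" .
    show "\<exists>j. 1 \<le> j \<and> real j \<le> \<epsilon> * real N + 1 \<and> bdigit y (N + j) = 1"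
    proof (intro exI[of _ "e i - N"] conjI)
      show "real (e i - N) \<le> \<epsilon> * real N + 1" using k ki by (simp add: of_nat_diff algebra_simps)
      show "bdigit y (N + (e i - N)) = 1" using k eS[of i] unfolding one_positions_def by simp
    qed (use k in simp)
  qed
qed

lemma takagi_quotient_tendsto_of_density_regular:
  assumes nd: "\<not> dyadic x" and dr: "density_regular x"
  shows "(takagi_quotient x \<longlongrightarrow> d0 x - d1 x) (at 0)"
proof -
  have conv: "convergent (digit_avg x)" using dr unfolding density_regular_def by simp
  note conv' = convergent_digit_avg_one_minus[OF nd conv]
  have "sublinear_zero_runs x \<and> sublinear_zero_runs (1 - x)"
    using dr unfolding density_regular_def bpos_def
    using sublinear_zero_runs_of_d1_pos[OF conv] sublinear_zero_runs_of_d1_pos[OF conv'(1)]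
      sublinear_zero_runs_of_ratio[OF nd] sublinear_zero_runs_of_ratio[OF not_dyadic_one_minus[OF nd]]
    by (auto simp: conv'(2))
  moreover have "\<bar>1 - 2 * d1 x\<bar> \<le> 1" using d1_bounds[OF conv] by linarith
  ultimately have "(takagi_quotient x \<longlongrightarrow> 1 - 2 * d1 x) (at 0)"
    using takagi_quotient_tendsto_of_sublinear_runs[OF nd discrepancy_tendsto_of_convergent[OF conv]]
    by blast
  then show ?thesis unfolding d0_def by (simp add: algebra_simps)
qed

section \<open>Necessity of the ratio condition\<close>

lemma takagi_tail_dyadic_minus_ge:
  assumes "A \<le> k"
  shows "real (k - A) * (1/2)^k \<le> takagi_tail A (of_int P / 2^A - (1/2)^k)"
proof -
  have "dist_int (2^(A+i) * (of_int P / 2^A - (1/2)^k)) / 2^(A+i) = (1/2::real)^k" if i: "i < k - A" for i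
  proof -
    obtain q where "k - A = Suc (i + q)" using i less_iff_Suc_add[of i "k - A"] by blast
    then have q: "k = A + i + Suc q" using assms by simp
    have "(2::real)^(A+i) * (of_int P / 2^A - (1/2)^k) = of_int (P * 2^i) - (1/2)^(Suc q)"
      unfolding q by (simp add: power_add power_one_over right_diff_distrib)
    then have "dist_int (2^(A+i) * (of_int P / 2^A - (1/2)^k)) = dist_int ((1/2::real)^(Suc q))"
      by (simp only: dist_int_of_int_diff)
    also have "\<dots> = (1/2)^(Suc q)" by (rule dist_int_eq_self) (auto simp: power_le_one_iff)
    finally show ?thesis unfolding q by (simp add: power_add power_one_over)
  qed
  then have "real (k - A) * (1/2)^k = (\<Sum>i<k - A. dist_int (2^(A+i) * (of_int P / 2^A - (1/2)^k)) / 2^(A+i))"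
    by simp
  also have "\<dots> \<le> takagi_tail A (of_int P / 2^A - (1/2)^k)" by (rule takagi_tail_ge_partial)
  finally show ?thesis .
qed

lemma takagi_term_below_odd_dyadic:
  assumes "Suc a \<le> k"
  shows "dist_int (2^a * ((2 * of_int J + 1) / 2^(Suc a) - (1/2)^k)) / 2^a = 1 / 2^(Suc a) - (1/2::real)^k"
proof -
  define s where "s = (2::real)^a * (1/2)^k"
  obtain q where q: "k = Suc a + q" using assms by (metis le_Suc_ex)
  have "s = (1/2)^(Suc q)" unfolding s_def q by (simp add: power_add power_one_over)
  then have s: "0 \<le> s" "s \<le> 1/2" unfolding s_def by (simp_all add: power_le_one_iff)
  have e: "(2::real)^a * ((2 * of_int J + 1) / 2^(Suc a) - (1/2)^k) = of_int J + 1/2 - s"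
    unfolding s_def by (simp add: field_simps)
  have "dist_int (of_int J + 1/2 - s) = 1/2 - s"
    using dist_int_half_interval[of "2*J" "of_int J + 1/2 - s"] s by simp
  then show ?thesis unfolding e s_def by (simp add: field_simps)
qed

lemma truncation_error_bounds:
  assumes gap: "\<And>i. 1 \<le> i \<Longrightarrow> i \<le> j \<Longrightarrow> bdigit x (A + i) = 0"
  shows "0 \<le> x - of_int \<lfloor>2^A * x\<rfloor> / 2^A" "x - of_int \<lfloor>2^A * x\<rfloor> / 2^A \<le> (1/2::real)^(A + j)"
proof -
  have wf: "x - of_int \<lfloor>2^A * x\<rfloor> / 2^A = frac (2^A * x) / (2::real)^A"
    unfolding frac_def by (simp add: field_simps)
  then show "0 \<le> x - of_int \<lfloor>2^A * x\<rfloor> / 2^A" by simp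
  have "frac (2^A * x) / 2^A < (1/2::real)^j / 2^A"
    using frac_pow2_less_zero_digits[OF gap] by (intro divide_strict_right_mono) auto
  then show "x - of_int \<lfloor>2^A * x\<rfloor> / 2^A \<le> (1/2::real)^(A + j)"
    unfolding wf by (simp add: power_add power_one_over mult.commute)
qed

text \<open>If \<open>x\<close> has a 1 at position \<open>A\<close> followed by \<open>j\<close> zeros and \<open>p\<close> is its truncation after
  position \<open>A\<close>, then just below \<open>p\<close> the Takagi function is larger than at \<open>x\<close> by about
  \<open>(k - 2A) 2^-k\<close>: the digit discrepancy up to \<open>A\<close> costs at most \<open>A\<close> per unit length, while
  the tail beyond \<open>A\<close> gains \<open>(k - A) 2^-k\<close>.\<close>
lemma takagi_series_below_truncation_ge:
  assumes one: "bdigit x (Suc a) = 1"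
    and gap: "\<And>i. 1 \<le> i \<Longrightarrow> i \<le> j \<Longrightarrow> bdigit x (Suc a + i) = 0"
    and k: "Suc a < k"
  shows "(real k - 2 * real (Suc a)) * (1/2)^k - real (Suc a + j) * (1/2)^(Suc a + j)
    \<le> takagi_series (of_int \<lfloor>2^(Suc a) * x\<rfloor> / 2^(Suc a) - (1/2)^k) - takagi_series x"
proof -
  define A where "A = Suc a"
  define J where "J = \<lfloor>(2::real)^a * x\<rfloor>"
  define p where "p = of_int \<lfloor>2^A * x\<rfloor> / (2::real)^A"
  define t where "t = (1/2::real)^k"
  define w where "w = x - p"
  define n where "n = A + j"
  have p: "p = (2 * of_int J + 1) / 2^A"
    unfolding p_def A_def J_def using floor_pow2_Suc[of a x] one by simp
  have w: "0 \<le> w" "w \<le> (1/2)^n"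
    using truncation_error_bounds[of j x A] gap unfolding w_def p_def n_def A_def by auto
  have "A \<le> k" using k unfolding A_def by simp
  then have t: "0 < t" "t \<le> (1/2)^A" unfolding t_def by (simp_all add: power_decreasing)
  have "p - (1/2)^A = of_int J / 2^a" "p \<le> (of_int J + 1) / 2^a"
    unfolding p A_def by (simp_all add: field_simps)
  moreover have "J = \<lfloor>2^a * x\<rfloor>" by (simp add: J_def)
  ultimately have "p - t \<in> dyadic_cell a x" using t unfolding dyadic_cell_def by auto
  from takagi_series_diff_dyadic_cell[OF this dyadic_cell_self]
  have G: "takagi_series (p - t) - takagi_series x
      = - (digit_discrepancy a x * (w + t)) + takagi_tail a (p - t) - takagi_tail a x"
    unfolding w_def by (simp add: algebra_simps)
  have "digit_discrepancy a x * (w + t) \<le> real a * (w + t)"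
    using abs_digit_discrepancy_le[of a x] w t by (intro mult_right_mono) auto
  then have D: "digit_discrepancy a x * (w + t) \<le> real a * w + real a * t"
    by (simp add: distrib_left)
  have T1: "takagi_tail a (p - t) = 1 / 2^A - t + takagi_tail A (p - t)"
    using takagi_tail_Suc[of a "p - t"] takagi_term_below_odd_dyadic[of a k J] k
    unfolding p t_def A_def by simp
  have "real (k - A) * t \<le> takagi_tail A (p - t)"
    using takagi_tail_dyadic_minus_ge[of A k "2 * J + 1"] k unfolding p t_def A_def by simp
  then have T2: "real k * t - real A * t \<le> takagi_tail A (p - t)"
    using k unfolding A_def by (simp add: of_nat_diff left_diff_distrib)
  have T3: "takagi_tail a x \<le> 1 / 2^A + takagi_tail A x"
    using takagi_tail_Suc[of a x] divide_right_mono[OF dist_int_le_half[of "2^a * x"], of "2^a"]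
    unfolding A_def by simp
  have T4: "takagi_tail A x \<le> real j * w + (1/2)^n"
    using takagi_tail_diff[of A x p j] takagi_tail_dyadic[of A "\<lfloor>2^A * x\<rfloor>"] w
    unfolding n_def w_def p_def by simp
  have "real (a + j) * w \<le> real (a + j) * (1/2)^n" using w by (intro mult_left_mono) auto
  then have W: "real a * w + real j * w + (1/2)^n \<le> real n * (1/2)^n"
    unfolding n_def A_def by (simp add: algebra_simps)
  have AA: "real A * t = real a * t + t" unfolding A_def by (simp add: algebra_simps)
  have "real k * t - 2 * (real A * t) - real n * (1/2)^n \<le> takagi_series (p - t) - takagi_series x"
    using G D T1 T2 T3 T4 W AA by linarith
  then have "(real k - 2 * real A) * t - real n * (1/2)^n \<le> takagi_series (p - t) - takagi_series x"
    by (simp add: algebra_simps)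
  then show ?thesis unfolding p_def t_def n_def A_def .
qed

text \<open>Compare the increment of the previous lemma, at distance \<open>|h| \<approx> 2^-k\<close> to the left of \<open>x\<close>,
  with the approximate linearisation of slope \<open>1\<close> near \<open>x\<close>.\<close>
lemma gap_inequality_of_bound:
  assumes bound: "\<And>h. h \<noteq> 0 \<Longrightarrow> \<bar>h\<bar> < d \<Longrightarrow>
      \<bar>takagi_series (x+h) - takagi_series x - 1*h*log_inv_abs h\<bar> \<le> \<eta>*\<bar>h\<bar>*log_inv_abs h"
    and \<eta>: "\<eta> \<le> 1"
    and one: "bdigit x (Suc a) = 1" and gap: "\<And>i. Suc a < i \<Longrightarrow> i < B \<Longrightarrow> bdigit x i = 0"
    and r: "1 \<le> r" "Suc a + r < B" and small: "(1/2)^a < d"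
  shows "(2 - \<eta>) * real (B - r) - (1 - \<eta>) \<le> 2 * real (Suc a) + real (B - 1) * (1/2)^(r - 1)"
proof -
  define k where "k = B - r"
  define j where "j = B - 1 - Suc a"
  define p where "p = of_int \<lfloor>2^(Suc a) * x\<rfloor> / (2::real)^(Suc a)"
  define t where "t = (1/2::real)^k"
  define \<rho> where "\<rho> = (1/2::real)^(r - 1)"
  have k: "Suc a < k" "Suc a + j = B - 1" "B - 1 = k + (r - 1)" using r unfolding k_def j_def by auto
  have gap': "\<And>i. 1 \<le> i \<Longrightarrow> i \<le> j \<Longrightarrow> bdigit x (Suc a + i) = 0"
    using gap unfolding j_def by auto
  have \<rho>t: "(1/2::real)^(B - 1) = \<rho> * t" unfolding k(3) \<rho>_def t_def by (simp add: power_add)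
  have "0 \<le> x - p" "x - p \<le> (1/2)^(Suc a + j)"
    unfolding p_def using truncation_error_bounds[OF gap'] by blast+
  moreover have "\<rho> * t \<le> 1 * t"
    unfolding \<rho>_def t_def by (intro mult_right_mono) (simp_all add: power_le_one_iff)
  ultimately have w: "0 \<le> x - p" "x - p \<le> \<rho> * t" "x - p \<le> t"
    unfolding k(2) \<rho>t by simp_all
  have "(real k - 2 * real (Suc a)) * t - real (Suc a + j) * (1/2)^(Suc a + j)
      \<le> takagi_series (p - t) - takagi_series x"
    unfolding p_def t_def by (rule takagi_series_below_truncation_ge[where j = j, OF one gap' k(1)])
  then have low: "(real k - 2 * real (Suc a)) * t - real (B - 1) * (\<rho> * t) \<le> takagi_series (p - t) - takagi_series x"
    unfolding k(2) \<rho>t .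
  define h where "h = p - t - x"
  obtain k' where k': "k = Suc k'" using k(1) by (cases k) auto
  have t: "0 < t" "2 * t = (1/2)^(k - 1)" unfolding t_def k' by simp_all
  have h: "h \<noteq> 0" "t \<le> \<bar>h\<bar>" "\<bar>h\<bar> \<le> (1/2)^(k - 1)" "\<bar>h\<bar> = - h" using w t unfolding h_def by auto
  moreover have "(1/2::real)^(k - 1) \<le> (1/2)^a" using k(1) by (intro power_decreasing) auto
  ultimately have "\<bar>h\<bar> < d" using small by linarith
  then have up: "takagi_series (x + h) - takagi_series x \<le> - ((1 - \<eta>) * (\<bar>h\<bar> * log_inv_abs h))"
    using abs_le_D1[OF bound[OF h(1)]] h(4) by (simp add: algebra_simps)
  have L: "real (k - 1) \<le> log_inv_abs h" using log_inv_abs_ge[OF h(1) h(3)] .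
  have "t * real (k - 1) \<le> \<bar>h\<bar> * log_inv_abs h"
    using h(2) L t(1) by (intro mult_mono) auto
  then have "(1 - \<eta>) * (t * real (k - 1)) \<le> (1 - \<eta>) * (\<bar>h\<bar> * log_inv_abs h)"
    using \<eta> by (intro mult_left_mono) auto
  then have "t * ((real k - 2 * real (Suc a)) - real (B - 1) * \<rho> + (1 - \<eta>) * (real k - 1)) \<le> t * 0"
    using low up k(1) unfolding h_def by (simp add: of_nat_diff algebra_simps)
  then have "(real k - 2 * real (Suc a)) - real (B - 1) * \<rho> + (1 - \<eta>) * (real k - 1) \<le> 0"
    using t(1) by (simp only: mult_le_cancel_left_pos)
  then show ?thesis unfolding k_def \<rho>_def by (simp add: algebra_simps)
qed

lemma gap_inequality_imp_bound:
  fixes A B r \<rho> \<delta> :: real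
  assumes \<delta>: "0 < \<delta>" "\<delta> \<le> 1" and "0 \<le> r" "0 \<le> A" "(1 + \<delta>) * A < B" "(B - 1) * \<rho> \<le> \<delta> * B / 4"
    and g: "(2 - \<delta> / 4) * (B - r) - (1 - \<delta> / 4) \<le> 2 * A + (B - 1) * \<rho>"
  shows "\<delta> * A < 2 * r + 1"
proof -
  have "(2 - \<delta> / 4) * (B - r) = 2 * B - 2 * r - \<delta> * B / 4 + \<delta> * r / 4" by (simp add: field_simps)
  moreover have "0 \<le> \<delta> * r" using assms by simp
  ultimately have "2 * B - \<delta> * B / 2 \<le> 2 * A + 2 * r + 1" using assms by linarith
  moreover have "0 < (2 - \<delta> / 2) * (B - (1 + \<delta>) * A)" using assms by (intro mult_pos_pos) auto
  moreover have "(2 - \<delta> / 2) * (B - (1 + \<delta>) * A) = 2 * B - \<delta> * B / 2 - 2 * A - 3 / 2 * (\<delta> * A) + \<delta> * \<delta> * A / 2"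
    by (simp add: field_simps)
  moreover have "\<delta> * \<delta> \<le> \<delta> * 1" using \<delta> by (intro mult_left_mono) auto
  then have "\<delta> * \<delta> * A \<le> \<delta> * A" using \<open>0 \<le> A\<close> by (metis mult.right_neutral mult_right_mono)
  ultimately show ?thesis by linarith
qed

lemma enumerate_one_positions_Suc_le:
  assumes nd: "\<not> dyadic x" and lim: "(takagi_quotient x \<longlongrightarrow> 1) (at 0)" and \<delta>: "0 < \<delta>" "\<delta> \<le> 1"
  shows "\<exists>A0. \<forall>m. A0 \<le> enumerate (one_positions x) m \<longrightarrow>
           real (enumerate (one_positions x) (Suc m)) \<le> (1 + \<delta>) * real (enumerate (one_positions x) m)"
proof -
  define e where "e = enumerate (one_positions x)"
  have inf: "infinite (one_positions x)" by (rule infinite_one_positions[OF nd])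
  obtain d where "d > 0" and bound: "\<And>h. h \<noteq> 0 \<Longrightarrow> \<bar>h\<bar> < d \<Longrightarrow>
      \<bar>takagi_series (x+h) - takagi_series x - 1*h*log_inv_abs h\<bar> \<le> \<delta> / 4*\<bar>h\<bar>*log_inv_abs h"
    using takagi_quotient_tendsto_imp_bound[OF lim, of "\<delta> / 4"] \<delta> by auto
  obtain r0 where r0: "(1/2::real)^r0 < \<delta> / 4" using real_arch_pow_inv[of "\<delta> / 4" "1/2"] \<delta> by auto
  define r where "r = Suc r0"
  obtain A1 where A1: "(1/2::real)^A1 < d" using real_arch_pow_inv[OF \<open>d > 0\<close>, of "1/2"] by auto
  obtain A2 where A2: "(2 * real r + 1) / \<delta> < real A2" using reals_Archimedean2 by blast
  show ?thesis unfolding e_def[symmetric]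
  proof (rule exI[of _ "max (Suc A1) A2"], intro allI impI)
    fix m assume m: "max (Suc A1) A2 \<le> e m"
    define A where "A = e m"
    define B where "B = e (Suc m)"
    show "real B \<le> (1 + \<delta>) * real A"
    proof (rule ccontr)
      assume "\<not> ?thesis"
      then have BA: "(1 + \<delta>) * real A < real B" by simp
      obtain a where a: "A = Suc a" "A1 \<le> a" using m unfolding A_def by (cases "e m") auto
      have one: "bdigit x (Suc a) = 1"
        using enumerate_in_set[OF inf, of m] a unfolding A_def e_def one_positions_def by simp
      have gap: "bdigit x i = 0" if "Suc a < i" "i < B" for i
      proof -
        have "i \<notin> one_positions x"
        proof
          assume "i \<in> one_positions x"
          then obtain l where "e l = i" using enumerate_Ex[OF inf] unfolding e_def by blast
          then show False using that inf unfolding a(1)[symmetric] A_def B_def e_def by auto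
        qed
        then show ?thesis using bdigit_0_or_1[of x i] that unfolding one_positions_def by auto
      qed
      have "2 * real r + 1 < \<delta> * real A2" using A2 \<delta> by (simp add: field_simps)
      also have "\<dots> \<le> \<delta> * real A" using m \<delta> unfolding A_def by (intro mult_left_mono) auto
      finally have "2 * real r + 1 < \<delta> * real A" .
      then have r: "1 \<le> r" "Suc a + r < B" using BA a(1) unfolding r_def by (auto simp: algebra_simps)
      have "(1/2::real)^a \<le> (1/2)^A1" using a by (intro power_decreasing) auto
      then have "(1/2::real)^a < d" using A1 by linarith
      then have "(2 - \<delta> / 4) * real (B - r) - (1 - \<delta> / 4) \<le> 2 * real A + real (B - 1) * (1/2)^(r - 1)"
        using gap_inequality_of_bound[where d = d and \<eta> = "\<delta> / 4", OF bound _ one gap r] \<delta> a(1) by simp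
      moreover have "real (B - 1) * (1/2)^(r - 1) \<le> real B * (\<delta> / 4)"
        using r0 unfolding r_def by (intro mult_mono) auto
      ultimately have "\<delta> * real A < 2 * real r + 1"
        using gap_inequality_imp_bound[OF \<delta>, of "real r" "real A" "real B" "(1/2)^(r - 1)"] BA r
        by (simp add: of_nat_diff mult.commute)
      with \<open>2 * real r + 1 < \<delta> * real A\<close> show False by linarith
    qed
  qed
qed

lemma apos_ratio_tendsto_1:
  assumes nd: "\<not> dyadic x" and lim: "(takagi_quotient x \<longlongrightarrow> 1) (at 0)"
  shows "(\<lambda>n. real (apos x (Suc n)) / real (apos x n)) \<longlonglongrightarrow> 1"
proof (rule LIMSEQ_I)
  fix \<epsilon> :: real assume \<epsilon>: "0 < \<epsilon>"
  define e where "e = enumerate (one_positions x)"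
  have inf: "infinite (one_positions x)" by (rule infinite_one_positions[OF nd])
  define \<delta> where "\<delta> = min \<epsilon> 1 / 2"
  have \<delta>: "0 < \<delta>" "\<delta> \<le> 1" "\<delta> < \<epsilon>" using \<epsilon> unfolding \<delta>_def by auto
  obtain A0 where A0: "\<And>m. A0 \<le> e m \<Longrightarrow> real (e (Suc m)) \<le> (1 + \<delta>) * real (e m)"
    using enumerate_one_positions_Suc_le[OF nd lim \<delta>(1,2)] unfolding e_def by blast
  show "\<exists>n0. \<forall>n\<ge>n0. norm (real (apos x (Suc n)) / real (apos x n) - 1) < \<epsilon>"
  proof (rule exI[of _ "Suc A0"], intro allI impI)
    fix n assume n: "Suc A0 \<le> n"
    then obtain m where m: "n = Suc m" "A0 \<le> m" by (cases n) auto
    have "A0 \<le> e m" using le_enumerate[OF inf, of m] m unfolding e_def by simp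
    then have up: "real (e (Suc m)) \<le> (1 + \<delta>) * real (e m)" by (rule A0)
    have "e m < e (Suc m)" unfolding e_def using inf by simp
    moreover have "1 \<le> e m" using enumerate_in_set[OF inf, of m] unfolding e_def one_positions_def by simp
    ultimately have "1 \<le> real (e (Suc m)) / real (e m)" "real (e (Suc m)) / real (e m) \<le> 1 + \<delta>"
      using up by (simp_all add: field_simps)
    then show "norm (real (apos x (Suc n)) / real (apos x n) - 1) < \<epsilon>"
      unfolding m(1) apos_Suc e_def[symmetric] using \<delta> by simp
  qed
qed

section \<open>Symmetry and the main theorem\<close>

lemma takagi_quotient_one_minus: "takagi_quotient (1 - x) h = - takagi_quotient x (- h)"
proof -
  have "takagi_series (1 - x + h) = takagi_series (x + - h)"
    using takagi_series_one_minus[of "x - h"] by (simp add: algebra_simps)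
  then show ?thesis
    unfolding takagi_quotient_def using takagi_series_one_minus[of x] by (simp add: field_simps)
qed

lemma takagi_quotient_one_minus_tendsto:
  assumes "(takagi_quotient x \<longlongrightarrow> c) (at 0)"
  shows "(takagi_quotient (1 - x) \<longlongrightarrow> - c) (at 0)"
proof -
  have "((\<lambda>h. takagi_quotient x (- h)) \<longlongrightarrow> c) (at 0) \<longleftrightarrow> (takagi_quotient x \<longlongrightarrow> c) (filtermap uminus (at 0))"
    by (rule filterlim_filtermap[symmetric])
  also have "filtermap uminus (at 0) = (at (0::real))"
    using filtermap_at_minus[of "0::real"] by simp
  finally have "((\<lambda>h. takagi_quotient x (- h)) \<longlongrightarrow> c) (at 0)" using assms by simp
  moreover have "takagi_quotient (1 - x) = (\<lambda>h. - takagi_quotient x (- h))"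
    by (rule ext) (rule takagi_quotient_one_minus)
  ultimately show ?thesis using tendsto_minus by metis
qed

lemma density_regular_of_takagi_quotient_tendsto:
  assumes nd: "\<not> dyadic x" and lim: "(takagi_quotient x \<longlongrightarrow> c) (at 0)"
  shows "density_regular x"
proof -
  note disc = convergent_of_discrepancy_tendsto[OF discrepancy_tendsto_of_takagi_quotient[OF nd lim]]
  consider "0 < d1 x \<and> d1 x < 1" | "d1 x = 0" | "d1 x = 1" using d1_bounds[OF disc(1)] by linarith
  then show ?thesis
  proof cases
    case 2
    then have "(\<lambda>n. real (apos x (Suc n)) / real (apos x n)) \<longlonglongrightarrow> 1"
      using apos_ratio_tendsto_1[OF nd] lim disc(2) by simp
    then show ?thesis unfolding density_regular_def using disc 2 by simp
  next
    case 3
    then have "(takagi_quotient (1 - x) \<longlongrightarrow> 1) (at 0)"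
      using takagi_quotient_one_minus_tendsto[OF lim] disc(2) by simp
    then have "(\<lambda>n. real (bpos x (Suc n)) / real (bpos x n)) \<longlonglongrightarrow> 1"
      unfolding bpos_def by (rule apos_ratio_tendsto_1[OF not_dyadic_one_minus[OF nd]])
    then show ?thesis unfolding density_regular_def using disc 3 by simp
  qed (use disc in \<open>simp add: density_regular_def\<close>)
qed

lemma takagi_quotient_eventually_eq:
  assumes "0 < x" "x < 1"
  shows "\<forall>\<^sub>F h in at 0. (takagi (x + h) - takagi x) / (h * log 2 (1 / \<bar>h\<bar>)) = takagi_quotient x h"
  unfolding eventually_at
proof (intro exI[of _ "min x (1 - x)"] conjI ballI impI)
  fix h :: real assume "h \<noteq> 0 \<and> dist h 0 < min x (1 - x)"
  then have "0 \<le> x + h" "x + h \<le> 1" by (auto simp: dist_real_def)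
  then show "(takagi (x + h) - takagi x) / (h * log 2 (1 / \<bar>h\<bar>)) = takagi_quotient x h"
    unfolding takagi_quotient_def log_inv_abs_def using takagi_eq_takagi_series assms by simp
qed (use assms in simp)

theorem theorem2:
  fixes x :: real
  assumes "0 < x" and "x < 1" and "\<not> dyadic x"
  shows "((\<exists>L. ((\<lambda>h. (takagi (x + h) - takagi x) / (h * log 2 (1 / \<bar>h\<bar>))) \<longlongrightarrow> L) (at 0))
           \<longleftrightarrow> density_regular x) \<and>
         (density_regular x \<longrightarrow>
         ((\<lambda>h. (takagi (x + h) - takagi x) / (h * log 2 (1 / \<bar>h\<bar>))) \<longlongrightarrow> d0 x - d1 x) (at 0))"
  using tendsto_cong[OF takagi_quotient_eventually_eq[OF assms(1,2)]]
    density_regular_of_takagi_quotient_tendsto[OF assms(3)]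
    takagi_quotient_tendsto_of_density_regular[OF assms(3)]
  by blast

end
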